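(* Let $\gamma$ follow the MFTR distribution with parameters $K>0$, $\Delta\in[0,1]$, $m>0$, $\mu>0$ and mean $\overline{\gamma}>0$. Then for every real $s\le 0$ the moment generating function $\mathcal{M}_\gamma(s)=\mathbb{E}\{e^{s\gamma}\}$ is $$\mathcal{M}_\gamma(s)=\frac{m^{m}\mu^{\mu}(1+K)^{\mu}\left(\mu(1+K)-\overline{\gamma}s\right)^{m-\mu}}{\left(\sqrt{\mathcal{R}(s)}\right)^{m}}\,P_{m-1}\!\left(\frac{m\mu(1+K)-(\mu K+m)\overline{\gamma}s}{\sqrt{\mathcal{R}(s)}}\right),$$ where $$\mathcal{R}(s)=\left[(m+\mu K)^2-(\mu K\Delta)^2\right]\overline{\gamma}^2s^2-2m\mu(1+K)(m+\mu K)\overline{\gamma}s+\left[(1+K)m\mu\right]^2 .$$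
   Context: MFTR (multi-cluster fluctuating two-ray) distribution. Fix parameters $K>0$, $\Delta\in[0,1]$, $m>0$, $\mu>0$, $\overline{\gamma}>0$. Physical model (for positive integer $\mu$): let $W=\left|\sqrt{\zeta}\,(V_1e^{j\phi_1}+V_2e^{j\phi_2})+X_1+jY_1\right|^2+\sum_{i=2}^{\mu}\left|\sqrt{\zeta}\,U_ie^{j\varphi_i}+X_i+jY_i\right|^2$, where $V_1,V_2,U_2,\dots,U_\mu\ge 0$ are constants, $\phi_1,\phi_2,\varphi_2,\dots,\varphi_\mu$ are i.i.d. uniform on $[0,2\pi)$, $X_i,Y_i$ ($i=1,\dots,\mu$) are i.i.d. $\mathcal{N}(0,\sigma^2)$, and $\zeta$ is Gamma distributed with density $m^m x^{m-1}e^{-mx}/\Gamma(m)$ on $x>0$ (unit mean), all mutually independent; $K=\frac{V_1^2+V_2^2+\sum_{i=2}^\mu U_i^2}{2\sigma^2\mu}$, $\Delta=\frac{2V_1V_2}{V_1^2+V_2^2+\sum_{i=2}^\mu U_i^2}$, and the SNR is $\gamma=(E_s/N_0)W$ with constant $E_s/N_0>0$, so that $\overline{\gamma}=\mathbb{E}\{\gamma\}=(E_s/N_0)2\sigma^2\mu(1+K)$. General definition (any real $\mu>0$; for integer $\mu$ it yields the same law as the physical model): $\gamma$ has the MFTR distribution with parameters $(K,\Delta,m,\mu,\overline{\gamma})$ if, with $\Theta$ uniform on $[0,\pi]$ and conditionally on $\Theta=\theta$, $\gamma$ has the $\kappa$-$\mu$ shadowed distribution with parameters $\kappa_\theta=K(1+\Delta\cos\theta)$,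 $\mu$, $m$ and mean $\overline{\gamma}_\theta=\overline{\gamma}(1+\kappa_\theta)/(1+K)$. Here the $\kappa$-$\mu$ shadowed distribution with parameters $\kappa\ge0,\mu>0,m>0$ and mean $\bar g>0$ is the law on $(0,\infty)$ with MGF $\mathbb{E}\{e^{s\gamma}\}=\left(1-\frac{\bar g s}{\mu(1+\kappa)}\right)^{m-\mu}\left(1-\frac{(\mu\kappa+m)\bar g s}{m\mu(1+\kappa)}\right)^{-m}$, $s\le0$. Notation: $P_\nu(z)={}_2F_1\!\left(-\nu,\nu+1;1;\frac{1-z}{2}\right)$ is the Legendre function of the first kind of degree $\nu$, ${}_2F_1$ the Gauss hypergeometric function. *)

theory Defs
  imports "HOL-Probability.Probability"
begin

definition hyp2F1_series :: "real \<Rightarrow> real \<Rightarrow> real \<Rightarrow> real \<Rightarrow> real" where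
  "hyp2F1_series a b c z =
     (\<Sum>n. pochhammer a n * pochhammer b n / (pochhammer c n * fact n) * z ^ n)"

text \<open>Principal branch of the Gauss hypergeometric function on the real half-line z < 1:
  the power series for |z| < 1, and its analytic continuation for z \<le> -1 given by
  Pfaff's transformation  2F1(a,b;c;z) = (1-z)^(-a) 2F1(a,c-b;c;z/(z-1)).\<close>
definition hyp2F1 :: "real \<Rightarrow> real \<Rightarrow> real \<Rightarrow> real \<Rightarrow> real" where
  "hyp2F1 a b c z =
     (if \<bar>z\<bar> < 1 then hyp2F1_series a b c z
      else if z \<le> -1 then (1 - z) powr (- a) * hyp2F1_series a (c - b) c (z / (z - 1))
      else undefined)"

definition legendreP :: "real \<Rightarrow> real \<Rightarrow> real" where
  "legendreP \<nu> z = hyp2F1 (- \<nu>) (\<nu> + 1) 1 ((1 - z) / 2)"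

definition kms_mgf :: "real \<Rightarrow> real \<Rightarrow> real \<Rightarrow> real \<Rightarrow> real \<Rightarrow> real" where
  "kms_mgf \<kappa> \<mu> m g s =
     (1 - g * s / (\<mu> * (1 + \<kappa>))) powr (m - \<mu>) *
     (1 - (\<mu> * \<kappa> + m) * g * s / (m * \<mu> * (1 + \<kappa>))) powr (- m)"

definition kms_distr :: "real \<Rightarrow> real \<Rightarrow> real \<Rightarrow> real \<Rightarrow> real measure \<Rightarrow> bool" where
  "kms_distr \<kappa> \<mu> m g N \<longleftrightarrow>
     prob_space N \<and> sets N = sets borel \<and> emeasure N {0<..} = 1 \<and>
     (\<forall>s\<le>0. (\<integral>x. exp (s * x) \<partial>N) = kms_mgf \<kappa> \<mu> m g s)"

definition mftr_distr :: "real \<Rightarrow> real \<Rightarrow> real \<Rightarrow> real \<Rightarrow> real \<Rightarrow> real measure \<Rightarrow> bool" where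
  "mftr_distr K \<Delta> m \<mu> g M \<longleftrightarrow>
     (\<exists>N. N \<in> measurable (uniform_measure lborel {0..pi}) (subprob_algebra borel) \<and>
          (\<forall>\<theta>\<in>{0..pi}. kms_distr (K * (1 + \<Delta> * cos \<theta>)) \<mu> m
                             (g * (1 + K * (1 + \<Delta> * cos \<theta>)) / (1 + K)) (N \<theta>)) \<and>
          M = (uniform_measure lborel {0..pi} \<bind> N))"

end

theory Submission
  imports Defs "HOL-Complex_Analysis.Complex_Analysis"
begin

text \<open>Conditionally on \<open>\<Theta> = \<theta>\<close>, the mean scaling makes the \<open>\<kappa>-\<mu>\<close> shadowed MGF equal to a
  \<open>\<theta>\<close>-independent factor times \<open>(a + b cos \<theta>)\<^sup>-\<^sup>m\<close> with \<open>0 \<le> b < a\<close>, so the MFTR MGF is that factor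
  times the average of \<open>(a + b cos \<theta>)\<^sup>-\<^sup>m\<close> over \<open>[0, \<pi>]\<close>. By Laplace's integral this average is
  \<open>(a\<^sup>2 - b\<^sup>2)\<^sup>-\<^sup>m\<^sup>/\<^sup>2 P\<^sub>m\<^sub>-\<^sub>1(a / sqrt (a\<^sup>2 - b\<^sup>2))\<close>. Laplace's integral itself follows by writing
  \<open>z + sqrt (z\<^sup>2 - 1) cos \<theta>\<close> as a multiple of \<open>|1 + r e\<^sup>i\<^sup>\<theta>|\<^sup>2\<close>, computing the average of
  \<open>|1 + r e\<^sup>i\<^sup>\<theta>|\<^sup>-\<^sup>2\<^sup>m\<close> as \<open>\<^sub>2F\<^sub>1(m, m; 1; r\<^sup>2)\<close> by Parseval, and identifying the result with
  \<open>P\<^sub>m\<^sub>-\<^sub>1(z) = \<^sub>2F\<^sub>1(1 - m, m; 1; (1 - z)/2)\<close> through the Pfaff and Euler transformations.\<close>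

section \<open>The formal hypergeometric series with lower parameter 1\<close>

definition hyp2F1_fps :: "complex \<Rightarrow> complex \<Rightarrow> complex fps" where
  "hyp2F1_fps a b = Abs_fps (\<lambda>n. pochhammer a n * pochhammer b n / (fact n)^2)"

definition hyp2F1_ode :: "complex \<Rightarrow> complex \<Rightarrow> complex fps \<Rightarrow> complex fps" where
  "hyp2F1_ode a b F = fps_X * (1 - fps_X) * fps_deriv (fps_deriv F)
     + (1 - fps_const (a + b + 1) * fps_X) * fps_deriv F - fps_const (a * b) * F"

lemma hyp2F1_ode_altdef:
  "hyp2F1_ode a b F = fps_X * (1 - fps_X) * fps_deriv (fps_deriv F)
     + (1 - (fps_const a + fps_const b + 1) * fps_X) * fps_deriv F - fps_const a * fps_const b * F"
  by (simp add: hyp2F1_ode_def)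

lemma hyp2F1_ode_nth:
  "hyp2F1_ode a b F $ n = (of_nat n + 1)^2 * F $ Suc n - (of_nat n + a) * (of_nat n + b) * F $ n"
proof -
  have ode: "hyp2F1_ode a b F = fps_X * fps_deriv (fps_deriv F) - fps_X * (fps_X * fps_deriv (fps_deriv F))
     + fps_deriv F - fps_const (a + b + 1) * (fps_X * fps_deriv F) - fps_const (a * b) * F"
    unfolding hyp2F1_ode_def by (simp add: algebra_simps)
  show ?thesis
  proof (cases n)
    case (Suc k)
    then show ?thesis
      by (cases k) (simp_all add: ode fps_X_mult_nth algebra_simps power2_eq_square)
  qed (simp add: ode fps_X_mult_nth)
qed

lemma hyp2F1_fps_nth_0 [simp]: "hyp2F1_fps a b $ 0 = 1"
  by (simp add: hyp2F1_fps_def)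

lemma hyp2F1_fps_nth_Suc:
  "(of_nat n + 1)^2 * hyp2F1_fps a b $ Suc n = (of_nat n + a) * (of_nat n + b) * hyp2F1_fps a b $ n"
proof -
  have fact_Suc: "fact (Suc n) = (of_nat n + 1) * (fact n :: complex)"
    by (simp add: algebra_simps)
  have "hyp2F1_fps a b $ Suc n = ((of_nat n + a) * (of_nat n + b)) * (pochhammer a n * pochhammer b n)
      / ((of_nat n + 1)^2 * (fact n)^2)"
    unfolding hyp2F1_fps_def fps_nth_Abs_fps pochhammer_rec' fact_Suc
    by (simp add: power_mult_distrib mult_ac add.commute)
  also have "\<dots> = ((of_nat n + a) * (of_nat n + b)) * hyp2F1_fps a b $ n / (of_nat n + 1)^2"
    by (simp add: hyp2F1_fps_def)
  moreover have "(of_nat n + 1 :: complex) \<noteq> 0"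
    by (metis of_nat_Suc of_nat_eq_0_iff add.commute nat.distinct(1))
  ultimately show ?thesis
    by simp
qed

lemma hyp2F1_ode_hyp2F1_fps: "hyp2F1_ode a b (hyp2F1_fps a b) = 0"
  by (rule fps_ext) (simp add: hyp2F1_ode_nth hyp2F1_fps_nth_Suc)

lemma hyp2F1_ode_solution_unique:
  assumes "hyp2F1_ode a b F = 0"
  shows "F = fps_const (F $ 0) * hyp2F1_fps a b"
proof (rule fps_ext)
  fix n show "F $ n = (fps_const (F $ 0) * hyp2F1_fps a b) $ n"
  proof (induction n)
    case (Suc n)
    have nz: "(of_nat n + 1 :: complex)^2 \<noteq> 0"
      by (metis of_nat_Suc of_nat_eq_0_iff add.commute nat.distinct(1) power_eq_0_iff)
    have "(of_nat n + 1)^2 * F $ Suc n = (of_nat n + a) * (of_nat n + b) * F $ n"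
      using arg_cong[OF assms, of "\<lambda>G. G $ n"] by (simp add: hyp2F1_ode_nth)
    also have "\<dots> = (of_nat n + 1)^2 * (F $ 0 * hyp2F1_fps a b $ Suc n)"
      using Suc hyp2F1_fps_nth_Suc[of n a b] by (simp add: algebra_simps)
    finally show ?case
      using nz by simp
  qed simp
qed

definition fps_one_minus_powr :: "complex \<Rightarrow> complex fps" where
  "fps_one_minus_powr c = fps_binomial c oo (- fps_X)"

lemma fps_one_minus_powr_nth_0 [simp]: "fps_one_minus_powr c $ 0 = 1"
  by (simp add: fps_one_minus_powr_def)

lemma fps_one_minus_powr_deriv:
  "(1 - fps_X) * fps_deriv (fps_one_minus_powr c) = - (fps_const c * fps_one_minus_powr c)"
proof -
  let ?B = "fps_binomial c"
  have "(1 + fps_X :: complex fps) \<noteq> 0"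
    by (intro notI) (drule arg_cong[of _ _ "\<lambda>f. fps_nth f 0"], simp)
  then have "(1 + fps_X) * fps_deriv ?B = fps_const c * ?B"
    by (simp add: fps_binomial_deriv)
  then have "((1 + fps_X) * fps_deriv ?B) oo (- fps_X) = (fps_const c * ?B) oo (- fps_X)"
    by simp
  then have "(1 - fps_X) * (fps_deriv ?B oo (- fps_X)) = fps_const c * fps_one_minus_powr c"
    by (simp add: fps_compose_mult_distrib fps_compose_add_distrib fps_one_minus_powr_def)
  moreover have "fps_deriv (fps_one_minus_powr c) = - (fps_deriv ?B oo (- fps_X))"
    unfolding fps_one_minus_powr_def by (subst fps_compose_deriv) auto
  ultimately show ?thesis
    by simp
qed

lemma fps_deriv_deriv_of_first_order_ode:
  assumes "(1 - fps_X) * fps_deriv F = fps_const k * (F :: complex fps)"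
  shows "(1 - fps_X) * fps_deriv (fps_deriv F) = (fps_const k + 1) * fps_deriv F"
proof -
  have "fps_deriv ((1 - fps_X) * fps_deriv F) = fps_deriv (fps_const k * F)"
    using assms by simp
  then have "(1 - fps_X) * fps_deriv (fps_deriv F) - fps_deriv F = fps_const k * fps_deriv F"
    by (simp add: algebra_simps)
  then show ?thesis
    by algebra
qed

section \<open>Euler's and Pfaff's transformations\<close>

text \<open>Both transformations are proved on the level of formal power series: the
  transformed series satisfies the hypergeometric equation with the new parameters (after clearing
  powers of \<open>1 - X\<close>), hence equals the hypergeometric series by uniqueness.\<close>

lemma hyp2F1_ode_euler:
  assumes "hyp2F1_ode a b G = 0"
  shows "hyp2F1_ode (1 - a) (1 - b) (fps_one_minus_powr (a + b - 1) * G) = 0"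
proof -
  define B where "B = fps_one_minus_powr (a + b - 1)"
  define A where "A = fps_const a"
  define A' where "A' = fps_const b"
  define D where "D = (1 - fps_X :: complex fps)"
  have B: "D * fps_deriv B = fps_const (- (a + b - 1)) * B"
    using fps_one_minus_powr_deriv[of "a + b - 1"] by (simp add: B_def D_def flip: mult_minus_left)
  have "fps_const (- (a + b - 1)) = 1 - A - A'"
    by (simp add: A_def A'_def fps_eq_iff)
  then have B': "D * fps_deriv B = (1 - A - A') * B"
    using B by simp
  have "fps_const (- (a + b - 1)) + 1 = 2 - A - A'"
    by (simp add: A_def A'_def fps_eq_iff fps_numeral_nth)
  then have B'': "D * fps_deriv (fps_deriv B) = (2 - A - A') * fps_deriv B"
    using fps_deriv_deriv_of_first_order_ode[OF B[unfolded D_def]] by (simp only: D_def)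
  have G: "fps_X * D * fps_deriv (fps_deriv G) + (1 - (A + A' + 1) * fps_X) * fps_deriv G - A * A' * G = 0"
    using assms unfolding hyp2F1_ode_altdef by (simp add: D_def A_def A'_def)
  have "fps_const (1 - a) = 1 - A" "fps_const (1 - b) = 1 - A'"
    by (simp_all add: A_def A'_def fps_eq_iff)
  then have "D * hyp2F1_ode (1 - a) (1 - b) (B * G) = 0"
    using B' B'' G unfolding D_def hyp2F1_ode_altdef by (simp add: fps_deriv_mult) algebra
  then show ?thesis
    by (simp add: D_def B_def)
qed

lemma hyp2F1_fps_euler:
  "hyp2F1_fps (1 - a) (1 - b) = fps_one_minus_powr (a + b - 1) * hyp2F1_fps a b"
  using hyp2F1_ode_solution_unique[OF hyp2F1_ode_euler[OF hyp2F1_ode_hyp2F1_fps]] by simp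

definition fps_pfaff_arg :: "complex fps" where
  "fps_pfaff_arg = - fps_X * inverse (1 - fps_X)"

lemma fps_pfaff_arg_nth_0 [simp]: "fps_pfaff_arg $ 0 = 0"
  by (simp add: fps_pfaff_arg_def)

lemma hyp2F1_ode_pfaff:
  assumes "hyp2F1_ode a b G = 0"
  shows "hyp2F1_ode (1 - a) b (fps_one_minus_powr (- b) * (G oo fps_pfaff_arg)) = 0"
proof -
  define B where "B = fps_one_minus_powr (- b)"
  define A where "A = fps_const a"
  define A' where "A' = fps_const b"
  define D where "D = (1 - fps_X :: complex fps)"
  define Q where "Q = fps_pfaff_arg"
  define G0 where "G0 = G oo Q"
  define G1 where "G1 = fps_deriv G oo Q"
  define G2 where "G2 = fps_deriv (fps_deriv G) oo Q"
  have B': "D * fps_deriv B = A' * B"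
    using fps_one_minus_powr_deriv[of "- b"] unfolding B_def D_def A'_def
    by (metis fps_const_neg minus_minus mult_minus_left)
  have B'': "D * fps_deriv (fps_deriv B) = (A' + 1) * fps_deriv B"
    using fps_deriv_deriv_of_first_order_ode[OF B'[unfolded A'_def D_def]]
    by (simp add: A'_def D_def)
  have Q: "D * Q = - fps_X"
    by (simp add: D_def Q_def fps_pfaff_arg_def inverse_mult_eq_1' mult.left_commute)
  have Q': "D * fps_deriv Q = Q - 1"
  proof -
    have "fps_deriv (D * Q) = fps_deriv (- fps_X)"
      using Q by simp
    then show ?thesis
      by (simp add: D_def algebra_simps)
  qed
  have Q'': "D * fps_deriv (fps_deriv Q) = 2 * fps_deriv Q"
  proof -
    have "fps_deriv (D * fps_deriv Q) = fps_deriv (Q - 1)"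
      using Q' by simp
    then show ?thesis
      by (simp add: D_def algebra_simps)
  qed
  have G0': "fps_deriv G0 = G1 * fps_deriv Q" and G1': "fps_deriv G1 = G2 * fps_deriv Q"
    unfolding G0_def G1_def G2_def by (rule fps_compose_deriv; simp add: Q_def)+
  have "hyp2F1_ode a b G oo Q = 0"
    by (simp add: assms)
  then have G: "Q * (1 - Q) * G2 + (1 - (A + A' + 1) * Q) * G1 - A * A' * G0 = 0"
    unfolding hyp2F1_ode_altdef G0_def G1_def G2_def A_def A'_def Q_def
    by (simp add: fps_compose_mult_distrib fps_compose_add_distrib fps_compose_sub_distrib algebra_simps)
  have "fps_const (1 - a) = 1 - A"
    by (simp add: A_def fps_eq_iff)
  then have "D * D * D * D * hyp2F1_ode (1 - a) b (B * G0) = 0"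
    using B' B'' Q Q' Q'' G unfolding D_def hyp2F1_ode_altdef A'_def[symmetric]
    by (simp add: fps_deriv_mult G0' G1') algebra
  then show ?thesis
    by (simp add: D_def B_def G0_def Q_def)
qed

lemma hyp2F1_fps_pfaff:
  "hyp2F1_fps (1 - a) b = fps_one_minus_powr (- b) * (hyp2F1_fps a b oo fps_pfaff_arg)"
  using hyp2F1_ode_solution_unique[OF hyp2F1_ode_pfaff[OF hyp2F1_ode_hyp2F1_fps]] by simp

section \<open>Convergence and the transformations for real arguments\<close>

lemma hyp2F1_fps_nth_gchoose: "hyp2F1_fps a b $ n = ((- a) gchoose n) * ((- b) gchoose n)"
  by (simp add: hyp2F1_fps_def gbinomial_pochhammer power2_eq_square power_mult_distrib[symmetric])

lemma summable_norm_gchoose_power: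
  fixes a z :: "'a :: {real_normed_field, banach}"
  assumes "norm z < 1"
  shows "summable (\<lambda>n. norm ((a gchoose n) * z ^ n))"
proof (rule abs_summable_in_conv_radius)
  have "ereal (norm z) < 1"
    using assms by simp
  also have "1 \<le> conv_radius (\<lambda>n. a gchoose n)"
    by (simp add: conv_radius_gchoose)
  finally show "ereal (norm z) < conv_radius (\<lambda>n. a gchoose n)" .
qed

text \<open>The coefficients are a product of two binomial coefficients, so with \<open>\<rho> = sqrt r\<close> the series
  at \<open>r\<close> is dominated by a bounded sequence times an absolutely convergent binomial series.\<close>

lemma fps_conv_radius_hyp2F1_fps: "1 \<le> fps_conv_radius (hyp2F1_fps a b)"
  unfolding fps_conv_radius_def
proof (rule conv_radius_geI_ex')
  fix r :: real assume r: "0 < r" "ereal r < 1"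
  define \<rho> where "\<rho> = sqrt r"
  have \<rho>: "0 \<le> \<rho>" "\<rho> < 1"
    using r by (auto simp: \<rho>_def real_sqrt_lt_1_iff)
  let ?u = "\<lambda>c n. (c gchoose n) * of_real \<rho> ^ n :: complex"
  have summ_a: "summable (\<lambda>n. norm (?u (- a) n))" and summ_b: "summable (\<lambda>n. norm (?u (- b) n))"
    using summable_norm_gchoose_power[of "of_real \<rho>"] \<rho> by auto
  from summable_LIMSEQ_zero[OF summ_a] have "Bseq (\<lambda>n. norm (?u (- a) n))"
    by (rule convergent_imp_Bseq[OF convergentI])
  then obtain C where C: "\<And>n. norm (norm (?u (- a) n)) \<le> C"
    by (meson BseqE)
  have split: "hyp2F1_fps a b $ n * of_real r ^ n = ?u (- a) n * ?u (- b) n" for n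
  proof -
    have "(of_real \<rho> :: complex) ^ n * of_real \<rho> ^ n = of_real r ^ n"
      using r by (simp add: \<rho>_def power_mult_distrib[symmetric] of_real_mult[symmetric] del: of_real_mult)
    then show ?thesis
      by (simp add: hyp2F1_fps_nth_gchoose mult_ac)
  qed
  show "summable (\<lambda>n. hyp2F1_fps a b $ n * of_real r ^ n)"
    unfolding split
  proof (rule summable_norm_cancel, rule summable_comparison_test')
    show "summable (\<lambda>n. C * norm (?u (- b) n))"
      using summ_b by (rule summable_mult)
    show "norm (norm (?u (- a) n * ?u (- b) n)) \<le> C * norm (?u (- b) n)" for n
      using C[of n] by (simp add: norm_mult mult_right_mono del: norm_of_real)
  qed
qed

lemma has_fps_expansion_hyp2F1_fps: "eval_fps (hyp2F1_fps a b) has_fps_expansion hyp2F1_fps a b"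
proof (rule eval_fps_has_fps_expansion)
  have "(0::ereal) < 1"
    by simp
  then show "0 < fps_conv_radius (hyp2F1_fps a b)"
    using fps_conv_radius_hyp2F1_fps by (rule less_le_trans)
qed

lemma holomorphic_on_eval_hyp2F1_fps [holomorphic_intros]:
  "A \<subseteq> ball 0 1 \<Longrightarrow> eval_fps (hyp2F1_fps a b) holomorphic_on A"
proof (rule holomorphic_on_eval_fps, rule subsetI)
  fix x assume "A \<subseteq> ball 0 1" "x \<in> A"
  then have "ereal (norm x) < 1"
    by auto
  then have "ereal (norm x) < fps_conv_radius (hyp2F1_fps a b)"
    using fps_conv_radius_hyp2F1_fps by (rule order.strict_trans2)
  then show "x \<in> eball 0 (fps_conv_radius (hyp2F1_fps a b))"
    by simp
qed

lemma has_fps_expansion_one_minus_powr: "(\<lambda>w. (1 - w) powr c) has_fps_expansion fps_one_minus_powr c"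
proof -
  have "((\<lambda>x. (1 + x) powr c) \<circ> (\<lambda>x. - x)) has_fps_expansion (fps_binomial c oo (- fps_X))"
    by (rule has_fps_expansion_compose has_fps_expansion_binomial_complex
             has_fps_expansion_minus has_fps_expansion_fps_X)+ simp
  then show ?thesis
    by (simp add: fps_one_minus_powr_def o_def)
qed

lemma holomorphic_on_one_minus_powr [holomorphic_intros]:
  "A \<subseteq> {z. Re z < 1} \<Longrightarrow> (\<lambda>w. (1 - w) powr c) holomorphic_on A"
  by (intro holomorphic_on_powr holomorphic_intros) (auto simp: complex_nonpos_Reals_iff subset_eq)

lemma eval_hyp2F1_fps_euler:
  assumes "norm w < 1"
  shows "eval_fps (hyp2F1_fps (1 - a) (1 - b)) w = (1 - w) powr (a + b - 1) * eval_fps (hyp2F1_fps a b) w"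
proof -
  let ?f = "\<lambda>w. (1 - w) powr (a + b - 1) * eval_fps (hyp2F1_fps a b) w"
  have f: "?f has_fps_expansion hyp2F1_fps (1 - a) (1 - b)"
    unfolding hyp2F1_fps_euler
    by (intro has_fps_expansion_mult has_fps_expansion_one_minus_powr has_fps_expansion_hyp2F1_fps)
  have "ball 0 1 \<subseteq> {z::complex. Re z < 1}"
    by (auto intro: le_less_trans[OF complex_Re_le_cmod])
  then have holo: "?f holomorphic_on ball 0 1"
    by (intro holomorphic_intros) auto
  show ?thesis
    using has_fps_expansion_imp_eval_fps_eq[OF f _ holo, of w] assms
      has_fps_expansion_imp_eval_fps_eq[OF has_fps_expansion_hyp2F1_fps _
        holomorphic_on_eval_hyp2F1_fps[OF order_refl], of w "1 - a" "1 - b"]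
    by simp
qed

lemma norm_pfaff_arg_less_1:
  fixes x :: complex
  assumes "Re x < 1/2"
  shows "norm (- x / (1 - x)) < 1"
proof -
  have "norm x ^ 2 = Re x ^ 2 + Im x ^ 2" "norm (1 - x) ^ 2 = (1 - Re x) ^ 2 + Im x ^ 2"
    by (simp_all add: cmod_power2)
  then have "norm x ^ 2 < norm (1 - x) ^ 2"
    using assms by (simp add: power2_eq_square algebra_simps)
  then have "norm x < norm (1 - x)"
    by (simp add: power_less_imp_less_base)
  then show ?thesis
    by (simp add: norm_divide divide_less_eq)
qed

lemma eval_hyp2F1_fps_pfaff:
  assumes "norm x < 1" "Re x < 1/2"
  shows "eval_fps (hyp2F1_fps (1 - a) b) x = (1 - x) powr (- b) * eval_fps (hyp2F1_fps a b) (- x / (1 - x))"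
proof -
  define D where "D = ball 0 1 \<inter> {z. Re z < 1/2}"
  define q where "q = (\<lambda>x::complex. - x / (1 - x))"
  define f where "f = (\<lambda>x. eval_fps (hyp2F1_fps (1 - a) b) x - (1 - x) powr (- b) * (eval_fps (hyp2F1_fps a b) \<circ> q) x)"
  have "q has_fps_expansion fps_pfaff_arg"
    unfolding q_def fps_pfaff_arg_def divide_inverse
    by (intro has_fps_expansion_mult has_fps_expansion_minus has_fps_expansion_fps_X
          has_fps_expansion_inverse has_fps_expansion_diff has_fps_expansion_1) simp
  then have "(eval_fps (hyp2F1_fps a b) \<circ> q) has_fps_expansion (hyp2F1_fps a b oo fps_pfaff_arg)"
    by (rule has_fps_expansion_compose[OF has_fps_expansion_hyp2F1_fps]) simp
  then have "f has_fps_expansion (hyp2F1_fps (1 - a) b - fps_one_minus_powr (- b) * (hyp2F1_fps a b oo fps_pfaff_arg))"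
    unfolding f_def by (intro has_fps_expansion_diff has_fps_expansion_mult has_fps_expansion_hyp2F1_fps has_fps_expansion_one_minus_powr)
  then have f0: "f has_fps_expansion 0"
    by (simp add: hyp2F1_fps_pfaff[symmetric])
  have "q holomorphic_on D"
    unfolding q_def by (intro holomorphic_intros) (auto simp: D_def complex_eq_iff)
  moreover have "q ` D \<subseteq> ball 0 1"
    using norm_pfaff_arg_less_1 by (auto simp: q_def D_def)
  ultimately have "(eval_fps (hyp2F1_fps a b) \<circ> q) holomorphic_on D"
    by (intro holomorphic_on_compose_gen[OF _ holomorphic_on_eval_hyp2F1_fps[OF order_refl]])
  moreover have "D \<subseteq> ball 0 1" "D \<subseteq> {z. Re z < 1}"
    by (auto simp: D_def)
  ultimately have "f holomorphic_on D"
    unfolding f_def by (intro holomorphic_intros holomorphic_on_eval_hyp2F1_fps holomorphic_on_one_minus_powr)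
  moreover have "open D" "convex D"
    unfolding D_def
    by (intro open_Int open_ball open_halfspace_Re_lt convex_Int convex_ball convex_halfspace_Re_lt)+
  moreover have "x \<in> D"
    using assms by (simp add: D_def)
  ultimately have "f x = 0"
    using has_fps_expansion_0_analytic_continuation[OF f0 _ _ convex_connected] by (simp add: D_def)
  then show ?thesis
    by (simp add: f_def q_def)
qed

lemma hyp2F1_series_eq_eval_fps:
  fixes a b x :: real
  assumes "\<bar>x\<bar> < 1"
  shows "complex_of_real (hyp2F1_series a b 1 x) = eval_fps (hyp2F1_fps (of_real a) (of_real b)) (of_real x)"
proof -
  define t where "t = (\<lambda>n. pochhammer a n * pochhammer b n / (pochhammer 1 n * fact n) * x ^ n)"
  have "ereal (norm (of_real x :: complex)) < 1"
    using assms by simp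
  then have "ereal (norm (of_real x :: complex)) < fps_conv_radius (hyp2F1_fps (of_real a) (of_real b))"
    using fps_conv_radius_hyp2F1_fps by (rule order.strict_trans2)
  from sums_eval_fps[OF this]
  have s: "(\<lambda>n. complex_of_real (t n)) sums eval_fps (hyp2F1_fps (of_real a) (of_real b)) (of_real x)"
    by (simp add: t_def hyp2F1_fps_def pochhammer_of_real pochhammer_fact[symmetric] power2_eq_square)
  then have "summable t"
    using summable_complex_of_real sums_summable by blast
  then have "(\<lambda>n. complex_of_real (t n)) sums complex_of_real (suminf t)"
    using sums_of_real summable_sums by blast
  with s show ?thesis
    by (simp add: hyp2F1_series_def t_def sums_unique2)
qed

lemma hyp2F1_series_euler:
  fixes a b w :: real
  assumes "\<bar>w\<bar> < 1"
  shows "hyp2F1_series (1 - a) (1 - b) 1 w = (1 - w) powr (a + b - 1) * hyp2F1_series a b 1 w"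
proof -
  have "(1 - complex_of_real w) powr (complex_of_real (a + b - 1)) = complex_of_real ((1 - w) powr (a + b - 1))"
    using powr_of_real[of "1 - w" "a + b - 1"] assms by simp
  then have "complex_of_real (hyp2F1_series (1 - a) (1 - b) 1 w)
      = complex_of_real ((1 - w) powr (a + b - 1) * hyp2F1_series a b 1 w)"
    using eval_hyp2F1_fps_euler[of "of_real w" "of_real a" "of_real b"] assms
      hyp2F1_series_eq_eval_fps[OF assms, of "1 - a" "1 - b"] hyp2F1_series_eq_eval_fps[OF assms, of a b]
    by simp
  then show ?thesis
    using of_real_eq_iff by blast
qed

lemma hyp2F1_series_pfaff:
  fixes a b x :: real
  assumes "- 1 < x" "x < 1/2"
  shows "hyp2F1_series (1 - a) b 1 x = (1 - x) powr (- b) * hyp2F1_series a b 1 (- x / (1 - x))"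
proof -
  have x: "norm (complex_of_real x) < 1" "Re (complex_of_real x) < 1/2" and "\<bar>x\<bar> < 1"
    using assms by auto
  have q: "- complex_of_real x / (1 - complex_of_real x) = complex_of_real (- x / (1 - x))"
    by simp
  have "\<bar>- x / (1 - x)\<bar> < 1"
    using norm_pfaff_arg_less_1[of "of_real x"] assms unfolding q norm_of_real by simp
  moreover have "(1 - complex_of_real x) powr (- complex_of_real b) = complex_of_real ((1 - x) powr (- b))"
    using powr_of_real[of "1 - x" "- b"] assms by simp
  ultimately have "complex_of_real (hyp2F1_series (1 - a) b 1 x)
      = complex_of_real ((1 - x) powr (- b) * hyp2F1_series a b 1 (- x / (1 - x)))"
    using eval_hyp2F1_fps_pfaff[OF x(1,2), of "of_real a" "of_real b"] q
      hyp2F1_series_eq_eval_fps[OF \<open>\<bar>x\<bar> < 1\<close>, of "1 - a" b] hyp2F1_series_eq_eval_fps[of "- x / (1 - x)" a b]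
    by simp
  then show ?thesis
    using of_real_eq_iff by blast
qed

lemma legendreP_eq_hyp2F1_series:
  fixes m z :: real
  assumes "1 \<le> z"
  shows "legendreP (m - 1) z = ((z + 1) / 2) powr (- m) * hyp2F1_series m m 1 ((z - 1) / (z + 1))"
proof -
  define x where "x = (1 - z) / 2"
  have x0: "x \<le> 0" and one_minus_x: "1 - x = (z + 1) / 2"
    using assms by (simp_all add: x_def field_simps)
  have legendre: "legendreP (m - 1) z = hyp2F1 (1 - m) m 1 x"
    by (simp add: legendreP_def x_def)
  show ?thesis
  proof (cases "\<bar>x\<bar> < 1")
    case True
    have "- x / (1 - x) = (z - 1) / (z + 1)"
      using assms by (simp add: x_def field_simps)
    moreover have "hyp2F1 (1 - m) m 1 x = (1 - x) powr (- m) * hyp2F1_series m m 1 (- x / (1 - x))"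
      using True x0 hyp2F1_series_pfaff[of x m m] by (simp add: hyp2F1_def)
    ultimately show ?thesis
      by (simp only: legendre one_minus_x)
  next
    case False
    define w where "w = (z - 1) / (z + 1)"
    have w: "\<bar>w\<bar> < 1" and w_x: "x / (x - 1) = w" and one_minus_w: "1 - w = inverse ((z + 1) / 2)"
      using assms by (auto simp: w_def x_def field_simps)
    have "hyp2F1 (1 - m) m 1 x = (1 - x) powr (- (1 - m)) * hyp2F1_series (1 - m) (1 - m) 1 (x / (x - 1))"
      using False x0 by (simp add: hyp2F1_def)
    also have "\<dots> = ((z + 1) / 2) powr (m - 1) * (inverse ((z + 1) / 2) powr (m + m - 1) * hyp2F1_series m m 1 w)"
      by (simp only: one_minus_x w_x hyp2F1_series_euler[OF w] one_minus_w) simp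
    also have "\<dots> = ((z + 1) / 2) powr (- m) * hyp2F1_series m m 1 w"
      by (simp only: inverse_powr powr_minus[symmetric] mult.assoc[symmetric] powr_add[symmetric]) simp
    finally show ?thesis
      by (simp add: legendre w_def)
  qed
qed

section \<open>Laplace's integral for the Legendre function\<close>

abbreviation uniform_0_pi :: "real measure" where
  "uniform_0_pi \<equiv> uniform_measure lborel {0..pi}"

lemma prob_space_uniform_0_pi: "prob_space uniform_0_pi"
  by (rule prob_space_uniform_measure) (auto simp: emeasure_lborel_Icc)

lemma integrable_uniform_0_pi_bounded:
  fixes f :: "real \<Rightarrow> real"
  assumes "f \<in> borel_measurable borel" "\<And>\<theta>. \<bar>f \<theta>\<bar> \<le> B"
  shows "integrable uniform_0_pi f"
  using prob_space_uniform_0_pi assms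
  by (intro finite_measure.integrable_const_bound[where B = B]) (auto simp: prob_space_def)

lemma integral_uniform_0_pi_cos_nat:
  "(\<integral>\<theta>. cos (real n * \<theta>) \<partial>uniform_0_pi) = (if n = 0 then 1 else 0)"
proof -
  have "(indicator {0..pi} x :: ennreal) / emeasure lborel {0..pi} = ennreal (indicator {0..pi} x / pi)" for x
    using divide_ennreal[of 1 pi] by (simp add: emeasure_lborel_Icc split: split_indicator)
  then have density: "uniform_0_pi = density lborel (\<lambda>x. ennreal (indicator {0..pi} x / pi))"
    by (simp add: uniform_measure_def)
  have "(\<integral>\<theta>. cos (real n * \<theta>) \<partial>uniform_0_pi) = (\<integral>x. indicator {0..pi} x * cos (real n * x) \<partial>lborel) / pi"
    unfolding density by (subst integral_density) (auto simp: integral_divide_zero)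
  moreover have "(\<integral>x. indicator {0..pi} x * cos (real n * x) \<partial>lborel) = (if n = 0 then pi else 0)"
  proof (cases "n = 0")
    case True
    have "(\<integral>x. indicator {0..pi} x *\<^sub>R (1::real) \<partial>lborel) = pi - 0"
      by (rule integral_FTC_atLeastAtMost[where F = "\<lambda>x. x"]) (auto intro!: derivative_eq_intros)
    then show ?thesis
      using True by simp
  next
    case False
    have "(\<integral>x. indicator {0..pi} x *\<^sub>R cos (real n * x) \<partial>lborel)
        = sin (real n * pi) / real n - sin (real n * 0) / real n"
      by (rule integral_FTC_atLeastAtMost[where F = "\<lambda>x. sin (real n * x) / real n"])
         (use False in \<open>auto intro!: derivative_eq_intros continuous_intros
           simp: has_real_derivative_iff_has_vector_derivative[symmetric]\<close>)
    then show ?thesis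
      using False by (simp add: sin_npi)
  qed
  ultimately show ?thesis
    by simp
qed

lemma integral_uniform_0_pi_suminf:
  fixes f :: "nat \<Rightarrow> real \<Rightarrow> real"
  assumes "\<And>i. f i \<in> borel_measurable borel" "\<And>i \<theta>. \<bar>f i \<theta>\<bar> \<le> B i" "summable B"
  shows "(\<integral>\<theta>. (\<Sum>i. f i \<theta>) \<partial>uniform_0_pi) = (\<Sum>i. \<integral>\<theta>. f i \<theta> \<partial>uniform_0_pi)"
proof (rule integral_suminf)
  show int: "integrable uniform_0_pi (f i)" for i
    by (rule integrable_uniform_0_pi_bounded[OF assms(1,2)])
  show "AE \<theta> in uniform_0_pi. summable (\<lambda>i. norm (f i \<theta>))"
    using assms by (intro AE_I2 summable_comparison_test[OF _ assms(3)]) auto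
  show "summable (\<lambda>i. \<integral>\<theta>. norm (f i \<theta>) \<partial>uniform_0_pi)"
  proof (rule summable_comparison_test[OF _ assms(3)], intro exI[of _ 0] allI impI)
    fix i
    have "(\<integral>\<theta>. norm (f i \<theta>) \<partial>uniform_0_pi) \<le> B i"
      using int[of i] assms(2) by (intro prob_space.integral_le_const[OF prob_space_uniform_0_pi]) auto
    then show "norm (\<integral>\<theta>. norm (f i \<theta>) \<partial>uniform_0_pi) \<le> B i"
      by simp
  qed
qed

text \<open>Since \<open>(1 + r\<^sup>2 + 2 r cos \<theta>)\<^sup>-\<^sup>m = |(1 + r e\<^sup>i\<^sup>\<theta>)\<^sup>-\<^sup>m|\<^sup>2\<close>, expanding
  \<open>(1 + r e\<^sup>i\<^sup>\<theta>)\<^sup>-\<^sup>m\<close> by the binomial series gives a double Fourier series whose off-diagonal terms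
  integrate to zero over \<open>[0, \<pi>]\<close> (Parseval), leaving \<open>\<Sum>\<^sub>k ((-m) gchoose k)\<^sup>2 r\<^sup>2\<^sup>k\<close>.\<close>

definition binomial_circle :: "real \<Rightarrow> real \<Rightarrow> real \<Rightarrow> complex" where
  "binomial_circle m r \<theta> = (1 + of_real r * cis \<theta>) powr of_real (- m)"

definition binomial_circle_row :: "real \<Rightarrow> real \<Rightarrow> nat \<Rightarrow> real \<Rightarrow> real" where
  "binomial_circle_row m r k \<theta> =
     Re (of_real ((- m) gchoose k) * (of_real r * cis \<theta>) ^ k * cnj (binomial_circle m r \<theta>))"

definition binomial_circle_entry :: "real \<Rightarrow> real \<Rightarrow> nat \<Rightarrow> nat \<Rightarrow> real \<Rightarrow> real" where
  "binomial_circle_entry m r k l \<theta> =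
     ((- m) gchoose k) * ((- m) gchoose l) * r ^ (k + l) * cos ((real k - real l) * \<theta>)"

lemma binomial_circle_sums:
  assumes "0 \<le> r" "r < 1"
  shows "(\<lambda>k. of_real ((- m) gchoose k) * (of_real r * cis \<theta>) ^ k) sums binomial_circle m r \<theta>"
proof -
  have "complex_of_real (a gchoose k) = of_real a gchoose k" for a k
    by (simp add: gbinomial_pochhammer pochhammer_of_real[symmetric])
  then show ?thesis
    using gen_binomial_complex[of "of_real r * cis \<theta>" "of_real (- m)"] assms
    by (simp add: binomial_circle_def norm_mult)
qed

lemma norm_one_plus_circle_sq: "norm (1 + of_real r * cis \<theta>) ^ 2 = 1 + r ^ 2 + 2 * r * cos \<theta>"
proof -
  have "norm (1 + of_real r * cis \<theta>) ^ 2 = (1 + r * cos \<theta>) ^ 2 + (r * sin \<theta>) ^ 2"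
    by (simp add: cmod_power2)
  also have "\<dots> = 1 + r ^ 2 * (sin \<theta> ^ 2 + cos \<theta> ^ 2) + 2 * r * cos \<theta>"
    by algebra
  finally show ?thesis
    by simp
qed

lemma norm_one_plus_circle_ge:
  assumes "0 \<le> r"
  shows "1 - r \<le> norm (1 + of_real r * cis \<theta>)"
  using norm_triangle_ineq2[of 1 "- of_real r * cis \<theta>"] assms by (simp add: norm_mult)

lemma norm_binomial_circle: "norm (binomial_circle m r \<theta>) = norm (1 + of_real r * cis \<theta>) powr (- m)"
  unfolding binomial_circle_def by (subst norm_powr_real_powr') auto

lemma binomial_circle_row_sums:
  assumes "0 \<le> r" "r < 1"
  shows "(\<lambda>k. binomial_circle_row m r k \<theta>) sums ((1 + r ^ 2 + 2 * r * cos \<theta>) powr (- m))"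
proof -
  have "(\<lambda>k. binomial_circle_row m r k \<theta>) sums Re (binomial_circle m r \<theta> * cnj (binomial_circle m r \<theta>))"
    unfolding binomial_circle_row_def by (intro sums_Re sums_mult2 binomial_circle_sums assms)
  moreover have "0 < norm (1 + of_real r * cis \<theta>)"
    using norm_one_plus_circle_ge[OF assms(1), of \<theta>] assms by linarith
  then have "Re (binomial_circle m r \<theta> * cnj (binomial_circle m r \<theta>)) = (norm (1 + of_real r * cis \<theta>) ^ 2) powr (- m)"
    by (simp add: complex_norm_square[symmetric] norm_binomial_circle power2_eq_square powr_mult
        del: of_real_power)
  ultimately show ?thesis
    by (simp only: norm_one_plus_circle_sq)
qed

lemma binomial_circle_entry_sums:
  assumes "0 \<le> r" "r < 1"
  shows "(\<lambda>l. binomial_circle_entry m r k l \<theta>) sums binomial_circle_row m r k \<theta>"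
proof -
  let ?c = "\<lambda>k. complex_of_real ((- m) gchoose k) * (of_real r * cis \<theta>) ^ k"
  have "(\<lambda>l. Re (?c k * cnj (?c l))) sums binomial_circle_row m r k \<theta>"
    unfolding binomial_circle_row_def
    by (intro sums_Re sums_mult sums_cnj[THEN iffD2] binomial_circle_sums assms)
  moreover have "Re (?c k * cnj (?c l)) = binomial_circle_entry m r k l \<theta>" for l
  proof -
    have "?c k * cnj (?c l) = of_real (((- m) gchoose k) * ((- m) gchoose l) * r ^ (k + l))
        * (cis (real k * \<theta>) * cis (- (real l * \<theta>)))"
      by (simp add: power_mult_distrib Complex.DeMoivre cis_cnj power_add mult_ac)
    also have "\<dots> = of_real (((- m) gchoose k) * ((- m) gchoose l) * r ^ (k + l)) * cis ((real k - real l) * \<theta>)"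
      by (simp add: cis_mult left_diff_distrib)
    finally have product: "?c k * cnj (?c l)
        = of_real (((- m) gchoose k) * ((- m) gchoose l) * r ^ (k + l)) * cis ((real k - real l) * \<theta>)" .
    show ?thesis
      unfolding product by (simp add: binomial_circle_entry_def)
  qed
  ultimately show ?thesis
    by simp
qed

lemma integral_binomial_circle_entry:
  "(\<integral>\<theta>. binomial_circle_entry m r k l \<theta> \<partial>uniform_0_pi) = (if k = l then ((- m) gchoose k) ^ 2 * r ^ (2 * k) else 0)"
proof -
  define d where "d = (if l \<le> k then k - l else l - k)"
  have "cos ((real k - real l) * \<theta>) = cos (real d * \<theta>)" for \<theta>
    using cos_minus[of "real d * \<theta>"] by (cases "l \<le> k") (auto simp: d_def of_nat_diff algebra_simps)
  then show ?thesis
    by (simp add: binomial_circle_entry_def integral_uniform_0_pi_cos_nat d_def power2_eq_square mult_2)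
qed

lemma integral_binomial_circle_row:
  assumes "0 \<le> r" "r < 1"
  shows "(\<integral>\<theta>. binomial_circle_row m r k \<theta> \<partial>uniform_0_pi) = ((- m) gchoose k) ^ 2 * r ^ (2 * k)"
proof -
  have "(\<integral>\<theta>. binomial_circle_row m r k \<theta> \<partial>uniform_0_pi) = (\<integral>\<theta>. (\<Sum>l. binomial_circle_entry m r k l \<theta>) \<partial>uniform_0_pi)"
    using binomial_circle_entry_sums[OF assms] by (simp add: sums_iff)
  also have "\<dots> = (\<Sum>l. \<integral>\<theta>. binomial_circle_entry m r k l \<theta> \<partial>uniform_0_pi)"
  proof (rule integral_uniform_0_pi_suminf)
    show "binomial_circle_entry m r k l \<in> borel_measurable borel" for l
      unfolding binomial_circle_entry_def by measurable
    show "\<bar>binomial_circle_entry m r k l \<theta>\<bar> \<le> (\<bar>(- m) gchoose k\<bar> * r ^ k) * (\<bar>(- m) gchoose l\<bar> * r ^ l)" for l \<theta>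
    proof -
      have "\<bar>binomial_circle_entry m r k l \<theta>\<bar>
          = \<bar>(- m) gchoose k\<bar> * \<bar>(- m) gchoose l\<bar> * r ^ (k + l) * \<bar>cos ((real k - real l) * \<theta>)\<bar>"
        using assms by (simp add: binomial_circle_entry_def abs_mult)
      also have "\<dots> \<le> \<bar>(- m) gchoose k\<bar> * \<bar>(- m) gchoose l\<bar> * r ^ (k + l)"
        using assms by (intro mult_left_le) auto
      finally show ?thesis
        by (simp add: power_add mult_ac)
    qed
    show "summable (\<lambda>l. (\<bar>(- m) gchoose k\<bar> * r ^ k) * (\<bar>(- m) gchoose l\<bar> * r ^ l))"
      using summable_norm_gchoose_power[of r "- m"] assms by (intro summable_mult) (simp add: abs_mult)
  qed
  also have "\<dots> = ((- m) gchoose k) ^ 2 * r ^ (2 * k)"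
    using sums_single[of k "\<lambda>_. ((- m) gchoose k) ^ 2 * r ^ (2 * k)"]
    by (simp add: integral_binomial_circle_entry sums_iff eq_commute)
  finally show ?thesis .
qed

lemma integral_uniform_0_pi_powr_cos:
  assumes "0 \<le> m" "0 \<le> r" "r < 1"
  shows "(\<integral>\<theta>. (1 + r ^ 2 + 2 * r * cos \<theta>) powr (- m) \<partial>uniform_0_pi) = hyp2F1_series m m 1 (r ^ 2)"
proof -
  have "(\<integral>\<theta>. (1 + r ^ 2 + 2 * r * cos \<theta>) powr (- m) \<partial>uniform_0_pi)
      = (\<integral>\<theta>. (\<Sum>k. binomial_circle_row m r k \<theta>) \<partial>uniform_0_pi)"
    using binomial_circle_row_sums[OF assms(2,3)] by (simp add: sums_iff)
  also have "\<dots> = (\<Sum>k. \<integral>\<theta>. binomial_circle_row m r k \<theta> \<partial>uniform_0_pi)"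
  proof (rule integral_uniform_0_pi_suminf)
    show "binomial_circle_row m r k \<in> borel_measurable borel" for k
    proof -
      have "binomial_circle_row m r k = (\<lambda>\<theta>. \<Sum>l. binomial_circle_entry m r k l \<theta>)"
        using binomial_circle_entry_sums[OF assms(2,3)] by (auto simp: sums_iff)
      then show ?thesis
        unfolding binomial_circle_entry_def by simp
    qed
    show "\<bar>binomial_circle_row m r k \<theta>\<bar> \<le> (\<bar>(- m) gchoose k\<bar> * r ^ k) * (1 - r) powr (- m)" for k \<theta>
    proof -
      have "\<bar>binomial_circle_row m r k \<theta>\<bar>
          \<le> norm (of_real ((- m) gchoose k) * (of_real r * cis \<theta>) ^ k * cnj (binomial_circle m r \<theta>))"
        unfolding binomial_circle_row_def by (rule abs_Re_le_cmod)
      also have "\<dots> = \<bar>(- m) gchoose k\<bar> * r ^ k * norm (binomial_circle m r \<theta>)"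
        using assms by (simp add: norm_mult norm_power)
      also have "\<dots> \<le> \<bar>(- m) gchoose k\<bar> * r ^ k * (1 - r) powr (- m)"
        using norm_one_plus_circle_ge[OF assms(2), of \<theta>] assms
        unfolding norm_binomial_circle by (intro mult_left_mono powr_mono2') auto
      finally show ?thesis .
    qed
    show "summable (\<lambda>k. (\<bar>(- m) gchoose k\<bar> * r ^ k) * (1 - r) powr (- m))"
      using summable_norm_gchoose_power[of r "- m"] assms by (intro summable_mult2) (simp add: abs_mult)
  qed
  also have "\<dots> = hyp2F1_series m m 1 (r ^ 2)"
    unfolding hyp2F1_series_def integral_binomial_circle_row[OF assms(2,3)]
    by (intro suminf_cong) (simp add: gbinomial_pochhammer pochhammer_fact[symmetric] power2_eq_square power_mult power_mult_distrib)
  finally show ?thesis .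
qed

lemma legendreP_laplace_integral:
  fixes m z :: real
  assumes "0 \<le> m" "1 \<le> z"
  shows "legendreP (m - 1) z = (\<integral>\<theta>. (z + sqrt (z\<^sup>2 - 1) * cos \<theta>) powr (- m) \<partial>uniform_0_pi)"
proof -
  define r where "r = sqrt ((z - 1) / (z + 1))"
  have r: "0 \<le> r" "r < 1" "r\<^sup>2 = (z - 1) / (z + 1)"
    using assms by (auto simp: r_def real_sqrt_lt_1_iff)
  have "sqrt (z\<^sup>2 - 1) = sqrt ((z + 1)\<^sup>2) * r"
    unfolding r_def real_sqrt_mult[symmetric]
    by (rule arg_cong[where f = sqrt]) (use assms in \<open>simp add: power2_eq_square field_simps\<close>)
  then have factor: "z + sqrt (z\<^sup>2 - 1) * cos \<theta> = (z + 1) / 2 * (1 + r\<^sup>2 + 2 * r * cos \<theta>)" for \<theta>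
    using assms r(3) by (simp add: field_simps)
  then have "(z + sqrt (z\<^sup>2 - 1) * cos \<theta>) powr (- m)
      = ((z + 1) / 2) powr (- m) * (1 + r\<^sup>2 + 2 * r * cos \<theta>) powr (- m)" for \<theta>
    by (simp only: powr_mult)
  then have "(\<integral>\<theta>. (z + sqrt (z\<^sup>2 - 1) * cos \<theta>) powr (- m) \<partial>uniform_0_pi)
      = ((z + 1) / 2) powr (- m) * (\<integral>\<theta>. (1 + r\<^sup>2 + 2 * r * cos \<theta>) powr (- m) \<partial>uniform_0_pi)"
    by simp
  also have "\<dots> = ((z + 1) / 2) powr (- m) * hyp2F1_series m m 1 ((z - 1) / (z + 1))"
    using integral_uniform_0_pi_powr_cos[OF assms(1) r(1,2)] by (simp only: r(3))
  finally show ?thesis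
    using legendreP_eq_hyp2F1_series[OF assms(2)] by simp
qed

lemma integral_uniform_0_pi_affine_cos_powr:
  fixes a b m :: real
  assumes "0 \<le> m" "0 \<le> b" "b < a"
  shows "(\<integral>\<theta>. (a + b * cos \<theta>) powr (- m) \<partial>uniform_0_pi)
    = sqrt (a\<^sup>2 - b\<^sup>2) powr (- m) * legendreP (m - 1) (a / sqrt (a\<^sup>2 - b\<^sup>2))"
proof -
  define d where "d = sqrt (a\<^sup>2 - b\<^sup>2)"
  have "b\<^sup>2 < a\<^sup>2"
    using assms by (simp add: power_strict_mono)
  then have d: "0 < d" "d\<^sup>2 = a\<^sup>2 - b\<^sup>2"
    by (simp_all add: d_def)
  have "d \<le> a"
    using d assms by (simp add: d_def real_sqrt_le_iff')
  then have z: "1 \<le> a / d"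
    using d by simp
  have "(a / d)\<^sup>2 - 1 = (b / d)\<^sup>2"
    using d by (simp add: power_divide field_simps)
  then have sqrt_eq: "sqrt ((a / d)\<^sup>2 - 1) = b / d"
    using d assms by simp
  have factor: "a + b * cos \<theta> = d * (a / d + sqrt ((a / d)\<^sup>2 - 1) * cos \<theta>)" for \<theta>
    unfolding sqrt_eq using d(1) by (simp add: field_simps)
  then have "(a + b * cos \<theta>) powr (- m) = d powr (- m) * (a / d + sqrt ((a / d)\<^sup>2 - 1) * cos \<theta>) powr (- m)" for \<theta>
    by (simp only: powr_mult)
  then have "(\<integral>\<theta>. (a + b * cos \<theta>) powr (- m) \<partial>uniform_0_pi)
      = d powr (- m) * (\<integral>\<theta>. (a / d + sqrt ((a / d)\<^sup>2 - 1) * cos \<theta>) powr (- m) \<partial>uniform_0_pi)"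
    by simp
  then show ?thesis
    using legendreP_laplace_integral[OF assms(1) z] by (simp add: d_def)
qed

section \<open>The MGF of the MFTR distribution\<close>

lemma integral_bind_kernel:
  fixes f :: "real \<Rightarrow> real"
  assumes N: "N \<in> measurable A (subprob_algebra borel)" and "space A \<noteq> {}"
    and f: "f \<in> borel_measurable borel" "\<And>x. 0 \<le> f x"
    and AE: "AE \<theta> in A. integrable (N \<theta>) f \<and> (\<integral>x. f x \<partial>N \<theta>) = k \<theta>"
    and k: "integrable A k"
  shows "(\<integral>x. f x \<partial>(A \<bind> N)) = (\<integral>\<theta>. k \<theta> \<partial>A)"
proof -
  have k_nonneg: "AE \<theta> in A. 0 \<le> k \<theta>"
    using AE by eventually_elim (metis f(2) integral_nonneg_AE AE_I2)
  have "sets (A \<bind> N) = sets borel"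
    using sets_bind[OF sets_kernel[OF N] assms(2)] .
  then have "f \<in> borel_measurable (A \<bind> N)"
    using f(1) by (simp cong: measurable_cong_sets)
  then have "(\<integral>x. f x \<partial>(A \<bind> N)) = enn2real (\<integral>\<^sup>+x. ennreal (f x) \<partial>(A \<bind> N))"
    using f(2) by (intro integral_eq_nn_integral) auto
  also have "(\<integral>\<^sup>+x. ennreal (f x) \<partial>(A \<bind> N)) = (\<integral>\<^sup>+\<theta>. \<integral>\<^sup>+x. ennreal (f x) \<partial>N \<theta> \<partial>A)"
    using f(1) by (intro nn_integral_bind[OF _ N]) measurable
  also have "\<dots> = (\<integral>\<^sup>+\<theta>. ennreal (k \<theta>) \<partial>A)"
    using AE by (intro nn_integral_cong_AE, eventually_elim) (use f(2) in \<open>auto simp: nn_integral_eq_integral\<close>)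
  also have "\<dots> = ennreal (\<integral>\<theta>. k \<theta> \<partial>A)"
    by (rule nn_integral_eq_integral[OF k k_nonneg])
  finally show ?thesis
    using k_nonneg by (simp add: integral_nonneg_AE)
qed

lemma kms_distr_integrable_exp:
  assumes "kms_distr \<kappa> \<mu> m g N" "s \<le> 0"
  shows "integrable N (\<lambda>x. exp (s * x))"
proof -
  interpret prob_space N
    using assms(1) by (simp add: kms_distr_def)
  have sets: "sets N = sets borel"
    using assms(1) by (simp add: kms_distr_def)
  have "AE x in N. x \<in> {0<..}"
    using assms(1) sets by (intro AE_prob_1) (auto simp: kms_distr_def emeasure_eq_measure)
  then have "AE x in N. norm (exp (s * x)) \<le> 1"
    by eventually_elim (use assms(2) in \<open>auto simp: mult_nonpos_nonneg\<close>)
  moreover have "(\<lambda>x. exp (s * x)) \<in> borel_measurable N"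
    using sets by (simp cong: measurable_cong_sets)
  ultimately show ?thesis
    by (rule integrable_const_bound)
qed

text \<open>Scaling the mean of each component by \<open>(1 + \<kappa>\<^sub>\<theta>)/(1 + K)\<close> cancels the \<open>\<theta>\<close>-dependence of the
  first factor of the \<open>\<kappa>-\<mu>\<close> shadowed MGF and makes the second one affine in \<open>cos \<theta>\<close>.\<close>

lemma kms_mgf_mftr_component:
  assumes "1 + K * (1 + \<Delta> * t) \<noteq> 0" "1 + K \<noteq> 0" "m \<noteq> 0" "\<mu> \<noteq> 0"
  shows "kms_mgf (K * (1 + \<Delta> * t)) \<mu> m (g * (1 + K * (1 + \<Delta> * t)) / (1 + K)) s
    = (1 - g * s / (\<mu> * (1 + K))) powr (m - \<mu>) * (m * \<mu> * (1 + K)) powr m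
      * (m * \<mu> * (1 + K) - (\<mu> * K + m) * g * s + (- \<mu> * K * \<Delta> * g * s) * t) powr (- m)"
proof -
  define \<kappa> where "\<kappa> = K * (1 + \<Delta> * t)"
  define C where "C = m * \<mu> * (1 + K)"
  have \<kappa>: "1 + \<kappa> \<noteq> 0"
    using assms(1) by (simp add: \<kappa>_def)
  have "g * (1 + \<kappa>) / (1 + K) * s / (\<mu> * (1 + \<kappa>)) = g * s / (\<mu> * (1 + K)) * ((1 + \<kappa>) / (1 + \<kappa>))"
    by (simp add: mult_ac)
  then have first: "g * (1 + \<kappa>) / (1 + K) * s / (\<mu> * (1 + \<kappa>)) = g * s / (\<mu> * (1 + K))"
    using \<kappa> by simp
  have "(\<mu> * \<kappa> + m) * (g * (1 + \<kappa>) / (1 + K)) * s / (m * \<mu> * (1 + \<kappa>))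
      = (\<mu> * \<kappa> + m) * g * s / C * ((1 + \<kappa>) / (1 + \<kappa>))"
    by (simp add: C_def mult_ac)
  then have "1 - (\<mu> * \<kappa> + m) * (g * (1 + \<kappa>) / (1 + K)) * s / (m * \<mu> * (1 + \<kappa>))
      = (C - (\<mu> * \<kappa> + m) * g * s) / C"
    using \<kappa> assms(2-4) by (simp add: C_def diff_divide_distrib)
  also have "C - (\<mu> * \<kappa> + m) * g * s = C - (\<mu> * K + m) * g * s + (- \<mu> * K * \<Delta> * g * s) * t"
    by (simp add: \<kappa>_def algebra_simps)
  finally have second: "1 - (\<mu> * \<kappa> + m) * (g * (1 + \<kappa>) / (1 + K)) * s / (m * \<mu> * (1 + \<kappa>))
      = (C - (\<mu> * K + m) * g * s + (- \<mu> * K * \<Delta> * g * s) * t) / C" .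
  show ?thesis
    unfolding kms_mgf_def \<kappa>_def[symmetric] first second C_def[symmetric]
    by (simp add: powr_divide powr_minus_divide)
qed

lemma mftr_mgf_prefactor:
  fixes m \<mu> K x :: real
  assumes "0 < \<mu>" "0 < 1 + K"
  shows "(1 - x / (\<mu> * (1 + K))) powr (m - \<mu>) * (m * \<mu> * (1 + K)) powr m
    = m powr m * \<mu> powr \<mu> * (1 + K) powr \<mu> * (\<mu> * (1 + K) - x) powr (m - \<mu>)"
proof -
  define Q where "Q = \<mu> * (1 + K)"
  have Q: "0 < Q"
    using assms by (simp add: Q_def)
  have "1 - x / Q = (Q - x) / Q"
    using Q by (simp add: field_simps)
  moreover have "Q powr m = Q powr \<mu> * Q powr (m - \<mu>)"
    by (simp flip: powr_add)
  moreover have "Q powr (m - \<mu>) \<noteq> 0"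
    using Q by simp
  ultimately have "(1 - x / Q) powr (m - \<mu>) * (m * Q) powr m = m powr m * Q powr \<mu> * (Q - x) powr (m - \<mu>)"
    by (simp add: powr_divide powr_mult field_simps)
  then show ?thesis
    by (simp add: Q_def powr_mult mult.assoc)
qed

lemma mftr_cos_coefficients:
  fixes K \<Delta> m \<mu> g s :: real
  assumes "K > 0" "0 \<le> \<Delta>" "\<Delta> \<le> 1" "m > 0" "\<mu> > 0" "g > 0" "s \<le> 0"
  shows "0 \<le> - \<mu> * K * \<Delta> * g * s"
    and "- \<mu> * K * \<Delta> * g * s < m * \<mu> * (1 + K) - (\<mu> * K + m) * g * s"
proof -
  have gs: "0 \<le> - (g * s)"
    using assms by (simp add: mult_nonneg_nonpos)
  have "- \<mu> * K * \<Delta> * g * s = (\<mu> * K * \<Delta>) * (- (g * s))"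
    by simp
  then show "0 \<le> - \<mu> * K * \<Delta> * g * s"
    using assms gs by (metis mult_nonneg_nonneg less_imp_le)
  have "m * \<mu> * (1 + K) - (\<mu> * K + m) * g * s - (- \<mu> * K * \<Delta> * g * s)
      = m * \<mu> * (1 + K) + (\<mu> * K * (1 - \<Delta>) + m) * (- (g * s))"
    by (simp add: algebra_simps)
  then show "- \<mu> * K * \<Delta> * g * s < m * \<mu> * (1 + K) - (\<mu> * K + m) * g * s"
    using assms gs by (smt (verit) mult_nonneg_nonneg mult_pos_pos)
qed

lemma integral_exp_mftr_distr:
  fixes K \<Delta> m \<mu> g s :: real and M :: "real measure"
  assumes "K > 0" "0 \<le> \<Delta>" "\<Delta> \<le> 1" "m > 0" "\<mu> > 0" "g > 0" "mftr_distr K \<Delta> m \<mu> g M" "s \<le> 0"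
  shows "(\<integral>x. exp (s * x) \<partial>M) = (1 - g * s / (\<mu> * (1 + K))) powr (m - \<mu>) * (m * \<mu> * (1 + K)) powr m
    * (\<integral>\<theta>. (m * \<mu> * (1 + K) - (\<mu> * K + m) * g * s + (- \<mu> * K * \<Delta> * g * s) * cos \<theta>) powr (- m) \<partial>uniform_0_pi)"
proof -
  obtain N where N: "N \<in> measurable uniform_0_pi (subprob_algebra borel)" and M: "M = uniform_0_pi \<bind> N"
    and kms: "\<And>\<theta>. \<theta> \<in> {0..pi} \<Longrightarrow>
      kms_distr (K * (1 + \<Delta> * cos \<theta>)) \<mu> m (g * (1 + K * (1 + \<Delta> * cos \<theta>)) / (1 + K)) (N \<theta>)"
    using assms(7) unfolding mftr_distr_def by blast
  define a where "a = m * \<mu> * (1 + K) - (\<mu> * K + m) * g * s"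
  define b where "b = - \<mu> * K * \<Delta> * g * s"
  define c where "c = (1 - g * s / (\<mu> * (1 + K))) powr (m - \<mu>) * (m * \<mu> * (1 + K)) powr m"
  have "0 \<le> b" "b < a"
    using mftr_cos_coefficients[OF assms(1-6,8)] by (simp_all add: a_def b_def)
  have component: "(\<integral>x. exp (s * x) \<partial>N \<theta>) = c * (a + b * cos \<theta>) powr (- m)" if "\<theta> \<in> {0..pi}" for \<theta>
  proof -
    have "0 \<le> 1 + \<Delta> * cos \<theta>"
      using assms(2,3) mult_left_mono[OF cos_ge_minus_one[of \<theta>] assms(2)] by linarith
    then have "1 + K * (1 + \<Delta> * cos \<theta>) \<noteq> 0"
      using assms(1) by (smt (verit) mult_nonneg_nonneg)
    then show ?thesis
      using kms[OF that] assms kms_mgf_mftr_component[of K \<Delta> "cos \<theta>" m \<mu> g s]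
      by (simp add: kms_distr_def a_def b_def c_def)
  qed
  have bounded: "\<bar>c * (a + b * cos \<theta>) powr (- m)\<bar> \<le> \<bar>c\<bar> * (a - b) powr (- m)" for \<theta>
  proof -
    have "a - b \<le> a + b * cos \<theta>"
      using \<open>0 \<le> b\<close> mult_left_mono[OF cos_ge_minus_one[of \<theta>], of b] by linarith
    then have "(a + b * cos \<theta>) powr (- m) \<le> (a - b) powr (- m)"
      using assms(4) \<open>b < a\<close> by (intro powr_mono2') auto
    then show ?thesis
      by (simp add: abs_mult mult_left_mono)
  qed
  have "(\<integral>x. exp (s * x) \<partial>M) = (\<integral>\<theta>. c * (a + b * cos \<theta>) powr (- m) \<partial>uniform_0_pi)"
    unfolding M
  proof (rule integral_bind_kernel[OF N])
    show "AE \<theta> in uniform_0_pi. integrable (N \<theta>) (\<lambda>x. exp (s * x))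
        \<and> (\<integral>x. exp (s * x) \<partial>N \<theta>) = c * (a + b * cos \<theta>) powr (- m)"
      using kms_distr_integrable_exp[OF kms assms(8)] component by (intro AE_uniform_measureI AE_I2) auto
    show "integrable uniform_0_pi (\<lambda>\<theta>. c * (a + b * cos \<theta>) powr (- m))"
      by (rule integrable_uniform_0_pi_bounded[OF _ bounded]) measurable
  qed auto
  then show ?thesis
    by (simp add: a_def b_def c_def)
qed

theorem lemma1:
  fixes K \<Delta> m \<mu> g s :: real and M :: "real measure"
  assumes "K > 0" and "0 \<le> \<Delta>" and "\<Delta> \<le> 1" and "m > 0" and "\<mu> > 0" and "g > 0"
    and "mftr_distr K \<Delta> m \<mu> g M"
    and "s \<le> 0"
  shows "(\<integral>x. exp (s * x) \<partial>M) =
    (let R = ((m + \<mu> * K)\<^sup>2 - (\<mu> * K * \<Delta>)\<^sup>2) * g\<^sup>2 * s\<^sup>2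
             - 2 * m * \<mu> * (1 + K) * (m + \<mu> * K) * g * s + ((1 + K) * m * \<mu>)\<^sup>2
     in m powr m * \<mu> powr \<mu> * (1 + K) powr \<mu> * (\<mu> * (1 + K) - g * s) powr (m - \<mu>)
        / (sqrt R) powr m
        * legendreP (m - 1) ((m * \<mu> * (1 + K) - (\<mu> * K + m) * g * s) / sqrt R))"
proof -
  define a where "a = m * \<mu> * (1 + K) - (\<mu> * K + m) * g * s"
  define b where "b = - \<mu> * K * \<Delta> * g * s"
  have "0 \<le> b" "b < a"
    using mftr_cos_coefficients[OF assms(1-6,8)] by (simp_all add: a_def b_def)
  have R: "((m + \<mu> * K)\<^sup>2 - (\<mu> * K * \<Delta>)\<^sup>2) * g\<^sup>2 * s\<^sup>2
      - 2 * m * \<mu> * (1 + K) * (m + \<mu> * K) * g * s + ((1 + K) * m * \<mu>)\<^sup>2 = a\<^sup>2 - b\<^sup>2"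
    by (simp add: a_def b_def power2_eq_square algebra_simps)
  have "(\<integral>x. exp (s * x) \<partial>M) = (1 - g * s / (\<mu> * (1 + K))) powr (m - \<mu>) * (m * \<mu> * (1 + K)) powr m
      * (\<integral>\<theta>. (a + b * cos \<theta>) powr (- m) \<partial>uniform_0_pi)"
    unfolding a_def b_def by (rule integral_exp_mftr_distr[OF assms])
  also have "\<dots> = m powr m * \<mu> powr \<mu> * (1 + K) powr \<mu> * (\<mu> * (1 + K) - g * s) powr (m - \<mu>)
      * (sqrt (a\<^sup>2 - b\<^sup>2) powr (- m) * legendreP (m - 1) (a / sqrt (a\<^sup>2 - b\<^sup>2)))"
    using assms \<open>0 \<le> b\<close> \<open>b < a\<close> by (simp add: mftr_mgf_prefactor integral_uniform_0_pi_affine_cos_powr)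
  finally show ?thesis
    by (simp add: Let_def R a_def powr_minus_divide)
qed

end
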